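(* Let $H_0$ be a bounded operator on a Hilbert space with $\|H_0\|=1$, finite-dimensional kernel, and a bounded reflexive generalized inverse $H_0^{(-1)}$; write $\varkappa=\varkappa(H_0,H_0^{(-1)})$. Let $w$ be bounded with $\|w\|=1$ and $0\le\lambda<1/(2\varkappa)$, and assume $\dim\mathrm{Ker}(H_0+\lambda w)=\dim\mathrm{Ker}\,H_0$. Then $$\sin\theta_{\max}(w,\lambda)\le\frac{\lambda\varkappa}{\sqrt{1-2\lambda\varkappa}}.$$ Consequently, if $\dim\mathrm{Ker}(H_0+\lambda w)=\dim\mathrm{Ker}H_0$ for all small $\lambda>0$, then $\limsup_{\lambda\to0^+}\theta_{\max}(w,\lambda)/\lambda\le\varkappa$; in particular the sensitivity satisfies $\mathcal{X}(w)\le\varkappa$ and $\mathcal{X}\le\varkappa$.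
   Context: A reflexive generalized inverse of $H_0$ is $H_0^{(-1)}$ with $H_0^{(-1)}H_0H_0^{(-1)}=H_0^{(-1)}$, $H_0H_0^{(-1)}H_0=H_0$; $\varkappa(H_0,H_0^{(-1)}):=\|H_0\|\|H_0^{(-1)}\|$. For closed subspaces, $P_{\mathcal{V}}$ denotes the orthogonal projector; the maximal angle $\theta_{\max}(w,\lambda)\in[0,\pi/2]$ is defined by $\sin\theta_{\max}(w,\lambda)=\|P_{\mathrm{Ker}(H_0+\lambda w)}-P_{\mathrm{Ker}H_0}\|$. The sensitivity to $w$ is $\mathcal{X}(w):=\frac{d}{d\lambda}\theta_{\max}(w,\lambda)|_{\lambda=0^+}$ (right derivative), and $\mathcal{X}:=\sup_{\|w\|=1}\mathcal{X}(w)$ over perturbations $w$ in a given symmetry class. *)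

theory Defs
  imports "HOL-Analysis.Analysis"
begin

definition kernel :: "('a::real_normed_vector \<Rightarrow>\<^sub>L 'b::real_normed_vector) \<Rightarrow> 'a set" where
  "kernel H = {x. blinfun_apply H x = 0}"

definition fin_dim :: "'a::real_vector set \<Rightarrow> bool" where
  "fin_dim V \<longleftrightarrow> (\<exists>B. finite B \<and> span B = V)"

definition refl_ginv :: "('a::real_normed_vector \<Rightarrow>\<^sub>L 'a) \<Rightarrow> ('a \<Rightarrow>\<^sub>L 'a) \<Rightarrow> bool" where
  "refl_ginv H G \<longleftrightarrow> G o\<^sub>L H o\<^sub>L G = G \<and> H o\<^sub>L G o\<^sub>L H = H"

definition kappa :: "('a::real_normed_vector \<Rightarrow>\<^sub>L 'a) \<Rightarrow> ('a \<Rightarrow>\<^sub>L 'a) \<Rightarrow> real" where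
  "kappa H G = norm H * norm G"

definition orth_proj :: "'a::real_inner set \<Rightarrow> 'a \<Rightarrow> 'a" where
  "orth_proj V x = (THE v. v \<in> V \<and> (\<forall>u\<in>V. inner (x - v) u = 0))"

definition sin_theta_max :: "('a::real_inner \<Rightarrow>\<^sub>L 'a) \<Rightarrow> ('a \<Rightarrow>\<^sub>L 'a) \<Rightarrow> real \<Rightarrow> real" where
  "sin_theta_max H0 w l =
     onorm (\<lambda>x. orth_proj (kernel (H0 + l *\<^sub>R w)) x - orth_proj (kernel H0) x)"

definition theta_max :: "('a::real_inner \<Rightarrow>\<^sub>L 'a) \<Rightarrow> ('a \<Rightarrow>\<^sub>L 'a) \<Rightarrow> real \<Rightarrow> real" where
  "theta_max H0 w l = arcsin (sin_theta_max H0 w l)"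

definition sensitivity :: "('a::real_inner \<Rightarrow>\<^sub>L 'a) \<Rightarrow> ('a \<Rightarrow>\<^sub>L 'a) \<Rightarrow> real" where
  "sensitivity H0 w = (THE D. (theta_max H0 w has_real_derivative D) (at_right 0))"

definition same_kernel_dim :: "('a::real_inner \<Rightarrow>\<^sub>L 'a) \<Rightarrow> ('a \<Rightarrow>\<^sub>L 'a) \<Rightarrow> real \<Rightarrow> bool" where
  "same_kernel_dim H0 w l \<longleftrightarrow>
     fin_dim (kernel (H0 + l *\<^sub>R w)) \<and> dim (kernel (H0 + l *\<^sub>R w)) = dim (kernel H0)"

end

theory Submission
  imports Defs
begin

text \<open>
  Let \<open>K = Ker H\<^sub>0\<close> and \<open>L = Ker (H\<^sub>0 + \<lambda> w)\<close>. For \<open>y \<in> L\<close> the vector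
  \<open>y - G H\<^sub>0 y\<close> lies in \<open>K\<close> (because \<open>H\<^sub>0 G H\<^sub>0 = H\<^sub>0\<close>) and \<open>G H\<^sub>0 y = -\<lambda> G w y\<close>,
  so every unit vector of \<open>L\<close> is within \<open>d = \<lambda>\<kappa>\<close> of \<open>K\<close>. For \<open>d < 1\<close> this makes the
  projection \<open>P\<^sub>K\<close> injective on \<open>L\<close>, hence (equal finite dimensions) onto \<open>K\<close>, so also
  every vector of \<open>K\<close> is close to \<open>L\<close>. Splitting \<open>x\<close> into its components in \<open>K\<close>
  and \<open>K\<^sup>\<bottom>\<close> and applying Pythagoras twice bounds \<open>\<parallel>P\<^sub>L - P\<^sub>K\<parallel>\<close> by \<open>d / sqrt (1 - d\<^sup>2)\<close>,
  which is at most \<open>d / sqrt (1 - 2d)\<close>. Since this bound is \<open>\<lambda>\<kappa> + o(\<lambda>)\<close>, the statements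
  about \<open>\<theta>\<^sub>m\<^sub>a\<^sub>x / \<lambda>\<close> and the sensitivity follow.
\<close>

lemma span_has_orthogonal_projection:
  fixes B :: "'a::real_inner set"
  assumes "finite B"
  shows "\<exists>v\<in>span B. \<forall>u\<in>span B. inner (x - v) u = 0"
  using assms
proof (induction B arbitrary: x rule: finite_induct)
  case empty
  then show ?case by auto
next
  case (insert b B)
  from insert.IH obtain p where p: "\<And>z. p z \<in> span B"
      "\<And>z u. u \<in> span B \<Longrightarrow> inner (z - p z) u = 0"
    by metis
  define r where "r = b - p b"
  have r_orth: "inner r u = 0" if "u \<in> span B" for u
    using p(2)[OF that] r_def by simp
  show ?case
  proof (cases "r = 0")
    case True
    then have "span (insert b B) = span B"
      using p(1)[of b] r_def by (simp add: span_redundant)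
    then show ?thesis using insert.IH[of x] by simp
  next
    case False
    define v where "v = p x + (inner (x - p x) r / inner r r) *\<^sub>R r"
    have "span B \<subseteq> span (insert b B)" by (rule span_mono) auto
    then have v_in: "v \<in> span (insert b B)"
      unfolding v_def r_def using p(1) by (intro span_add span_scale span_diff) (auto simp: span_base)
    have orth_B: "inner (x - v) u = 0" if "u \<in> span B" for u
      using p(2)[OF that, of x] r_orth[OF that] by (simp add: v_def inner_diff_left inner_add_left)
    have orth_r: "inner (x - v) r = 0"
      using False by (simp add: v_def inner_diff_left inner_add_left)
    have "inner (x - v) u = 0" if u: "u \<in> span (insert b B)" for u
    proof -
      obtain k where k: "u - k *\<^sub>R b \<in> span B"
        using span_breakdown_eq[THEN iffD1, OF u] by blast
      have "u = (u - k *\<^sub>R b) + k *\<^sub>R r + k *\<^sub>R p b" by (simp add: r_def algebra_simps)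
      then show ?thesis
        using orth_B[OF k] orth_r orth_B[OF p(1)[of b]] by (metis inner_add_right inner_scaleR_right mult_zero_right add_0)
    qed
    with v_in show ?thesis by blast
  qed
qed

lemma fin_dim_subspace: "fin_dim V \<Longrightarrow> subspace V"
  unfolding fin_dim_def using subspace_span by blast

lemma orthogonal_projection_unique:
  fixes V :: "'a::real_inner set"
  assumes "subspace V"
    and "v \<in> V" "\<forall>u\<in>V. inner (x - v) u = 0"
    and "v' \<in> V" "\<forall>u\<in>V. inner (x - v') u = 0"
  shows "v = v'"
proof -
  have "v - v' \<in> V" using assms by (simp add: subspace_diff)
  with assms have "inner (x - v') (v - v') - inner (x - v) (v - v') = 0" by simp
  then have "inner (v - v') (v - v') = 0" by (simp add: inner_diff_left algebra_simps)
  then show ?thesis by simp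
qed

lemma
  fixes V :: "'a::real_inner set"
  assumes "fin_dim V"
  shows orth_proj_in: "orth_proj V x \<in> V"
    and orth_proj_orthogonal: "u \<in> V \<Longrightarrow> inner (x - orth_proj V x) u = 0"
proof -
  obtain B where B: "finite B" "span B = V" using assms fin_dim_def by blast
  have "\<exists>!v. v \<in> V \<and> (\<forall>u\<in>V. inner (x - v) u = 0)"
    using span_has_orthogonal_projection[OF B(1), of x] B(2)
      orthogonal_projection_unique[OF fin_dim_subspace[OF assms]] by blast
  then have "orth_proj V x \<in> V \<and> (\<forall>u\<in>V. inner (x - orth_proj V x) u = 0)"
    unfolding orth_proj_def by (rule theI')
  then show "orth_proj V x \<in> V" "u \<in> V \<Longrightarrow> inner (x - orth_proj V x) u = 0" by auto
qed

lemma orth_proj_eqI: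
  fixes V :: "'a::real_inner set"
  assumes "fin_dim V" "v \<in> V" "\<And>u. u \<in> V \<Longrightarrow> inner (x - v) u = 0"
  shows "orth_proj V x = v"
  using orthogonal_projection_unique[OF fin_dim_subspace[OF assms(1)]]
    orth_proj_in[OF assms(1)] orth_proj_orthogonal[OF assms(1)] assms(2,3) by blast

lemma linear_orth_proj:
  fixes V :: "'a::real_inner set"
  assumes V: "fin_dim V"
  shows "linear (orth_proj V)"
proof
  have S: "subspace V" by (rule fin_dim_subspace[OF V])
  note orth = orth_proj_orthogonal[OF V]
  fix x y :: 'a and c :: real
  show "orth_proj V (x + y) = orth_proj V x + orth_proj V y"
    using orth[of _ x] orth[of _ y] orth_proj_in[OF V] S
    by (intro orth_proj_eqI[OF V])
      (simp_all add: subspace_add algebra_simps inner_diff_left inner_add_left)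
  show "orth_proj V (c *\<^sub>R x) = c *\<^sub>R orth_proj V x"
    using orth[of _ x] orth_proj_in[OF V] S
    by (intro orth_proj_eqI[OF V]) (simp_all add: subspace_scale algebra_simps inner_diff_left)
qed

lemma norm_orth_proj_Pythagorean:
  fixes V :: "'a::real_inner set"
  assumes V: "fin_dim V"
  shows "(norm x)\<^sup>2 = (norm (orth_proj V x))\<^sup>2 + (norm (x - orth_proj V x))\<^sup>2"
proof -
  have "orthogonal (orth_proj V x) (x - orth_proj V x)"
    using orth_proj_orthogonal[OF V orth_proj_in[OF V]] by (simp add: orthogonal_def inner_commute)
  then show ?thesis using norm_add_Pythagorean by fastforce
qed

lemma bounded_linear_orth_proj:
  fixes V :: "'a::real_inner set"
  assumes V: "fin_dim V"
  shows "bounded_linear (orth_proj V)"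
proof -
  have "norm (orth_proj V x) \<le> norm x * 1" for x
    using norm_orth_proj_Pythagorean[OF V, of x] by (simp add: power2_le_imp_le)
  then show ?thesis
    using linear_orth_proj[OF V] by (intro bounded_linear_intro[where K=1]) (auto simp: linear_add linear_scale)
qed

lemma orth_proj_dist_le:
  fixes V :: "'a::real_inner set"
  assumes V: "fin_dim V" and "k \<in> V"
  shows "norm (x - orth_proj V x) \<le> norm (x - k)"
proof -
  have "orth_proj V x - k \<in> V"
    using orth_proj_in[OF V] assms fin_dim_subspace[OF V] by (simp add: subspace_diff)
  then have "orthogonal (x - orth_proj V x) (orth_proj V x - k)"
    using orth_proj_orthogonal[OF V] by (simp add: orthogonal_def)
  then have "(norm (x - k))\<^sup>2 = (norm (x - orth_proj V x))\<^sup>2 + (norm (orth_proj V x - k))\<^sup>2"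
    using norm_add_Pythagorean by fastforce
  then show ?thesis by (simp add: power2_le_imp_le)
qed

lemma fin_dim_obtain_basis:
  fixes V :: "'a::real_vector set"
  assumes "fin_dim V"
  obtains B where "B \<subseteq> V" "independent B" "V \<subseteq> span B" "card B = dim V" "finite B"
proof -
  obtain F where F: "finite F" "span F = V" using assms fin_dim_def by blast
  obtain B where B: "B \<subseteq> V" "independent B" "V \<subseteq> span B" "card B = dim V"
    using basis_exists[of V] by blast
  have "finite B" using independent_span_bound[OF F(1) B(2)] B(1) F(2) by simp
  with B that show ?thesis by blast
qed

lemma fin_dim_independent_card_le:
  fixes V :: "'a::real_vector set"
  assumes "fin_dim V" "A \<subseteq> V" "independent A"
  shows "finite A \<and> card A \<le> dim V"
proof -
  obtain B where B: "V \<subseteq> span B" "card B = dim V" "finite B"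
    by (rule fin_dim_obtain_basis[OF assms(1)])
  have "A \<subseteq> span B" using assms(2) B(1) by blast
  then show ?thesis using independent_span_bound[OF B(3) assms(3)] B(2) by simp
qed

lemma linear_inj_on_imp_onto_fin_dim:
  fixes f :: "'a::real_vector \<Rightarrow> 'b::real_vector"
  assumes f: "linear f" "f ` L \<subseteq> K"
    and K: "fin_dim K" and L: "fin_dim L" and dim_eq: "dim L = dim K"
    and inj: "\<And>y. y \<in> L \<Longrightarrow> f y = 0 \<Longrightarrow> y = 0"
    and z: "z \<in> K"
  shows "\<exists>y\<in>L. f y = z"
proof -
  obtain B where B: "B \<subseteq> L" "independent B" "card B = dim L" "finite B"
    by (rule fin_dim_obtain_basis[OF L])
  have span_B: "span B \<subseteq> L" using B(1) fin_dim_subspace[OF L] by (simp add: span_minimal)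
  have inj_f: "inj_on f (span B)"
  proof (rule inj_onI)
    fix x y assume "x \<in> span B" "y \<in> span B" "f x = f y"
    moreover from this have "x - y \<in> L" using span_B span_diff by blast
    ultimately show "x = y" using inj[of "x - y"] linear_diff[OF f(1)] by simp
  qed
  have indep: "independent (f ` B)"
    by (rule linear_independent_injective_image[OF f(1) B(2) inj_f])
  have card: "card (f ` B) = dim K"
    using card_image[OF inj_on_subset[OF inj_f span_superset]] B(3) dim_eq by simp
  have "z \<in> span (f ` B)"
  proof (rule ccontr)
    assume z_notin: "z \<notin> span (f ` B)"
    then have "z \<notin> f ` B" by (metis span_base)
    then have "card (insert z (f ` B)) = dim K + 1"
      using card B(4) by (simp add: card_insert_disjoint)
    moreover have "insert z (f ` B) \<subseteq> K" using f(2) B(1) z by blast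
    then have "card (insert z (f ` B)) \<le> dim K"
      using fin_dim_independent_card_le[OF K _ independent_insertI[OF z_notin indep]] by simp
    ultimately show False by simp
  qed
  then have "z \<in> f ` span B" using span_linear_image[OF f(1), of B] by simp
  then show ?thesis using span_B by blast
qed

lemma dist_orth_proj_near_subspace:
  fixes K L :: "'a::real_inner set"
  assumes K: "fin_dim K" and L: "fin_dim L" and dim_eq: "dim L = dim K"
    and d: "0 \<le> d" "d < 1"
    and near: "\<And>y. y \<in> L \<Longrightarrow> norm (y - orth_proj K y) \<le> d * norm y"
    and z: "z \<in> K"
  shows "(norm (z - orth_proj L z))\<^sup>2 \<le> d\<^sup>2 / (1 - d\<^sup>2) * (norm z)\<^sup>2"
proof -
  have "y = 0" if "y \<in> L" "orth_proj K y = 0" for y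
    using near[OF that(1)] that(2) d(2) by (simp add: mult_le_cancel_right1)
  then obtain y where y: "y \<in> L" "orth_proj K y = z"
    using linear_inj_on_imp_onto_fin_dim[OF linear_orth_proj[OF K] _ K L dim_eq _ z]
      orth_proj_in[OF K] by blast
  have "norm (z - orth_proj L z) \<le> norm (y - z)"
    using orth_proj_dist_le[OF L y(1), of z] by (simp add: norm_minus_commute)
  also have "\<dots> \<le> d * norm y" using near[OF y(1)] y(2) by simp
  finally have dist_sq: "(norm (z - orth_proj L z))\<^sup>2 \<le> d\<^sup>2 * (norm y)\<^sup>2"
    by (metis norm_ge_zero power_mono power_mult_distrib)
  have "(norm y)\<^sup>2 = (norm z)\<^sup>2 + (norm (y - z))\<^sup>2"
    using norm_orth_proj_Pythagorean[OF K, of y] y(2) by simp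
  also have "(norm (y - z))\<^sup>2 \<le> d\<^sup>2 * (norm y)\<^sup>2"
    using near[OF y(1)] y(2) by (metis norm_ge_zero power_mono power_mult_distrib)
  finally have "(1 - d\<^sup>2) * (norm y)\<^sup>2 \<le> (norm z)\<^sup>2" by (simp add: algebra_simps)
  moreover have "0 < 1 - d\<^sup>2" using d by (simp add: power_less_one_iff abs_square_less_1)
  ultimately have "(norm y)\<^sup>2 \<le> (norm z)\<^sup>2 / (1 - d\<^sup>2)" by (simp add: field_simps)
  with dist_sq have "(norm (z - orth_proj L z))\<^sup>2 \<le> d\<^sup>2 * ((norm z)\<^sup>2 / (1 - d\<^sup>2))"
    by (meson mult_left_mono order_trans zero_le_power2)
  then show ?thesis by simp
qed

lemma orth_proj_near_subspace_of_orthogonal: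
  fixes K L :: "'a::real_inner set"
  assumes K: "fin_dim K" and L: "fin_dim L" and d: "0 \<le> d"
    and near: "\<And>y. y \<in> L \<Longrightarrow> norm (y - orth_proj K y) \<le> d * norm y"
    and b: "\<And>u. u \<in> K \<Longrightarrow> inner b u = 0"
  shows "norm (orth_proj L b) \<le> d * norm b"
proof -
  let ?Q = "orth_proj L b"
  have Q: "?Q \<in> L" by (rule orth_proj_in[OF L])
  have "(norm ?Q)\<^sup>2 = inner b ?Q"
    using orth_proj_orthogonal[OF L Q, of b] by (simp add: power2_norm_eq_inner inner_diff_left)
  also have "\<dots> = inner b (?Q - orth_proj K ?Q)"
    using b[OF orth_proj_in[OF K]] by (simp add: inner_diff_right)
  also have "\<dots> \<le> norm b * norm (?Q - orth_proj K ?Q)" by (rule norm_cauchy_schwarz)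
  also have "\<dots> \<le> norm b * (d * norm ?Q)" using near[OF Q] by (simp add: mult_left_mono)
  finally have "norm ?Q * norm ?Q \<le> (d * norm b) * norm ?Q"
    by (simp add: power2_eq_square algebra_simps)
  then show ?thesis
    using d by (cases "norm ?Q = 0") (auto simp: mult_le_cancel_right)
qed

lemma norm_orth_proj_diff_near_subspace:
  fixes K L :: "'a::real_inner set"
  assumes K: "fin_dim K" and L: "fin_dim L" and dim_eq: "dim L = dim K"
    and d: "0 \<le> d" "d < 1"
    and near: "\<And>y. y \<in> L \<Longrightarrow> norm (y - orth_proj K y) \<le> d * norm y"
  shows "norm (orth_proj L x - orth_proj K x) \<le> d / sqrt (1 - d\<^sup>2) * norm x"
proof -
  let ?P = "orth_proj K" and ?Q = "orth_proj L" and ?C = "d\<^sup>2 / (1 - d\<^sup>2)"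
  define a where "a = ?P x"
  define b where "b = x - ?P x"
  have a: "a \<in> K" using orth_proj_in[OF K] a_def by blast
  have b: "\<And>u. u \<in> K \<Longrightarrow> inner b u = 0" using orth_proj_orthogonal[OF K] b_def by blast
  have "?Q x - ?P x = ?Q b + (?Q a - a)"
    using linear_add[OF linear_orth_proj[OF L], of a b] by (simp add: a_def b_def)
  moreover have "orthogonal (?Q b) (?Q a - a)"
    using orth_proj_orthogonal[OF L orth_proj_in[OF L], of a b]
    by (simp add: orthogonal_def inner_commute inner_diff_right)
  ultimately have "(norm (?Q x - ?P x))\<^sup>2 = (norm (?Q b))\<^sup>2 + (norm (a - ?Q a))\<^sup>2"
    using norm_add_Pythagorean norm_minus_commute by metis
  also have "(norm (?Q b))\<^sup>2 \<le> ?C * (norm b)\<^sup>2"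
  proof -
    have "(norm (?Q b))\<^sup>2 \<le> d\<^sup>2 * (norm b)\<^sup>2"
      using orth_proj_near_subspace_of_orthogonal[OF K L d(1) near b]
      by (metis norm_ge_zero power_mono power_mult_distrib)
    moreover have "d\<^sup>2 \<le> ?C"
    proof -
      have "d\<^sup>2 * (1 - d\<^sup>2) \<le> d\<^sup>2" by (rule mult_left_le) auto
      moreover have "0 < 1 - d\<^sup>2" using d by (simp add: abs_square_less_1)
      ultimately show ?thesis by (simp add: le_divide_eq)
    qed
    ultimately show ?thesis by (meson mult_right_mono order_trans zero_le_power2)
  qed
  also have "(norm (a - ?Q a))\<^sup>2 \<le> ?C * (norm a)\<^sup>2"
    by (rule dist_orth_proj_near_subspace[OF K L dim_eq d near a])
  also have "?C * (norm b)\<^sup>2 + ?C * (norm a)\<^sup>2 = ?C * (norm x)\<^sup>2"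
    using norm_orth_proj_Pythagorean[OF K, of x] by (simp add: a_def b_def algebra_simps)
  finally have "norm (?Q x - ?P x) \<le> sqrt (?C * (norm x)\<^sup>2)"
    by (simp add: real_le_rsqrt)
  also have "\<dots> = d / sqrt (1 - d\<^sup>2) * norm x"
    using d by (simp add: real_sqrt_mult real_sqrt_divide)
  finally show ?thesis .
qed

lemma kernel_perturbation_near_kernel:
  fixes H0 G w :: "'a::real_inner \<Rightarrow>\<^sub>L 'a"
  assumes K: "fin_dim (kernel H0)" and G: "refl_ginv H0 G" and l: "0 \<le> l"
    and y: "y \<in> kernel (H0 + l *\<^sub>R w)"
  shows "norm (y - orth_proj (kernel H0) y) \<le> l * norm G * norm w * norm y"
proof -
  have Hy: "H0 y = - (l *\<^sub>R w y)"
    using y by (simp add: kernel_def eq_neg_iff_add_eq_0 blinfun.add_left blinfun.scaleR_left)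
  have "H0 (G (H0 y)) = H0 y"
    using G by (metis blinfun_apply_blinfun_compose refl_ginv_def)
  then have "y - G (H0 y) \<in> kernel H0" by (simp add: kernel_def blinfun.diff_right)
  then have "norm (y - orth_proj (kernel H0) y) \<le> norm (y - (y - G (H0 y)))"
    by (rule orth_proj_dist_le[OF K])
  also have "\<dots> = l * norm (G (w y))" using l by (simp add: Hy blinfun.minus_right blinfun.scaleR_right)
  also have "\<dots> \<le> l * (norm G * (norm w * norm y))"
    using norm_blinfun[of G "w y"] norm_blinfun[of w y]
    by (meson l mult_left_mono norm_ge_zero order_trans)
  finally show ?thesis by (simp add: mult.assoc)
qed

lemma kappa_eq_norm_ginv:
  "norm H0 = 1 \<Longrightarrow> kappa H0 G = norm G"
  by (simp add: kappa_def)

lemma kappa_pos: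
  assumes "norm H0 = 1" "refl_ginv H0 G"
  shows "0 < kappa H0 G"
proof -
  have "G \<noteq> 0"
  proof
    assume "G = 0"
    then have "H0 = 0" using assms(2) by (simp add: refl_ginv_def)
    with assms(1) show False by simp
  qed
  then show ?thesis using kappa_eq_norm_ginv[OF assms(1)] by simp
qed

lemma sin_theta_max_bounds:
  fixes H0 G w :: "'a::real_inner \<Rightarrow>\<^sub>L 'a"
  assumes H0: "norm H0 = 1" and K: "fin_dim (kernel H0)" and G: "refl_ginv H0 G"
    and w: "norm w = 1"
    and l: "0 \<le> l" "l < 1 / (2 * kappa H0 G)" and dim: "same_kernel_dim H0 w l"
  shows "sin_theta_max H0 w l \<le> l * kappa H0 G / sqrt (1 - 2 * l * kappa H0 G)"
    and "0 \<le> sin_theta_max H0 w l"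
proof -
  define d where "d = l * kappa H0 G"
  define L where "L = kernel (H0 + l *\<^sub>R w)"
  have L: "fin_dim L" "dim L = dim (kernel H0)"
    using dim by (auto simp: same_kernel_dim_def L_def)
  have d: "0 \<le> d" "d < 1 / 2"
    using l kappa_pos[OF H0 G] by (auto simp: d_def field_simps)
  have near: "norm (y - orth_proj (kernel H0) y) \<le> d * norm y" if "y \<in> L" for y
    using kernel_perturbation_near_kernel[OF K G l(1), of y w] that w
    by (simp add: L_def d_def kappa_eq_norm_ginv[OF H0])
  have "1 - 2 * d \<le> 1 - d\<^sup>2"
    using mult_right_mono[of d 2 d] d by (simp add: power2_eq_square)
  then have "d / sqrt (1 - d\<^sup>2) \<le> d / sqrt (1 - 2 * d)"
    using d by (intro divide_left_mono real_sqrt_le_mono) auto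
  moreover have "norm (orth_proj L x - orth_proj (kernel H0) x) \<le> d / sqrt (1 - d\<^sup>2) * norm x" for x
    by (rule norm_orth_proj_diff_near_subspace[OF K L(1,2) d(1)]) (use d near in auto)
  ultimately have "norm (orth_proj L x - orth_proj (kernel H0) x) \<le> d / sqrt (1 - 2 * d) * norm x" for x
    by (meson mult_right_mono norm_ge_zero order_trans)
  moreover have "0 \<le> d / sqrt (1 - 2 * d)" using d by simp
  ultimately have "sin_theta_max H0 w l \<le> d / sqrt (1 - 2 * d)"
    unfolding sin_theta_max_def L_def[symmetric] by (intro onorm_bound) auto
  then show "sin_theta_max H0 w l \<le> l * kappa H0 G / sqrt (1 - 2 * l * kappa H0 G)"
    by (simp add: d_def mult.assoc)
  show "0 \<le> sin_theta_max H0 w l"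
    unfolding sin_theta_max_def
    by (intro onorm_pos_le bounded_linear_sub bounded_linear_orth_proj K L(1)[unfolded L_def])
qed

lemma arcsin_bound_over_tendsto:
  fixes k :: real
  shows "((\<lambda>l. arcsin (l * k / sqrt (1 - 2 * l * k)) / l) \<longlongrightarrow> k) (at_right 0)"
proof -
  have "((\<lambda>l. arcsin (l * k / sqrt (1 - 2 * l * k))) has_real_derivative k) (at 0)"
    by (rule derivative_eq_intros refl | simp)+
  then have "((\<lambda>l. arcsin (l * k / sqrt (1 - 2 * l * k)) / l) \<longlongrightarrow> k) (at 0)"
    by (simp add: has_field_derivative_iff)
  then show ?thesis by (simp add: filterlim_at_split)
qed

lemma theta_max_over_tendsto_derivative:
  assumes "(theta_max H0 w has_real_derivative D) (at_right 0)"
  shows "((\<lambda>l. theta_max H0 w l / l) \<longlongrightarrow> D) (at_right 0)"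
  using assms by (simp add: has_field_derivative_iff theta_max_def sin_theta_max_def onorm_zero)

lemma sensitivity_eq:
  assumes D: "(theta_max H0 w has_real_derivative D) (at_right 0)"
  shows "sensitivity H0 w = D"
  unfolding sensitivity_def
proof (rule the_equality)
  fix D' assume "(theta_max H0 w has_real_derivative D') (at_right 0)"
  then show "D' = D"
    using tendsto_unique[OF trivial_limit_at_right_real] theta_max_over_tendsto_derivative D by blast
qed (rule D)

lemma Limsup_theta_max_over_le_kappa:
  fixes H0 G w :: "'a::real_inner \<Rightarrow>\<^sub>L 'a"
  assumes H0: "norm H0 = 1" and K: "fin_dim (kernel H0)" and G: "refl_ginv H0 G"
    and w: "norm w = 1"
    and dim: "\<forall>\<^sub>F l in at_right 0. same_kernel_dim H0 w l"
  shows "Limsup (at_right 0) (\<lambda>l. ereal (theta_max H0 w l / l)) \<le> ereal (kappa H0 G)"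
proof -
  define k where "k = kappa H0 G"
  define b where "b l = l * k / sqrt (1 - 2 * l * k)" for l :: real
  have "(b \<longlongrightarrow> 0) (at_right 0)"
    unfolding b_def by (rule tendsto_eq_intros refl | simp)+
  then have "\<forall>\<^sub>F l in at_right 0. b l < 1" by (rule order_tendstoD) simp
  moreover have "\<forall>\<^sub>F l in at_right 0. l < 1 / (2 * k)"
    using kappa_pos[OF H0 G] by (intro order_tendstoD(2)[OF tendsto_ident_at]) (simp add: k_def)
  ultimately have "\<forall>\<^sub>F l in at_right 0. ereal (theta_max H0 w l / l) \<le> ereal (arcsin (b l) / l)"
    using dim eventually_at_right_less
  proof eventually_elim
    case (elim l)
    then have "sin_theta_max H0 w l \<le> b l" "0 \<le> sin_theta_max H0 w l"
      using sin_theta_max_bounds[OF H0 K G w, of l] by (auto simp: b_def k_def)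
    with elim have "arcsin (sin_theta_max H0 w l) \<le> arcsin (b l)"
      by (intro arcsin_le_arcsin) auto
    with elim show ?case by (simp add: theta_max_def divide_right_mono)
  qed
  then have "Limsup (at_right 0) (\<lambda>l. ereal (theta_max H0 w l / l))
      \<le> Limsup (at_right 0) (\<lambda>l. ereal (arcsin (b l) / l))"
    by (rule Limsup_mono)
  also have "\<dots> = ereal k"
    by (rule lim_imp_Limsup) (simp_all add: b_def tendsto_ereal arcsin_bound_over_tendsto)
  finally show ?thesis by (simp add: k_def)
qed

lemma sensitivity_le_kappa:
  fixes H0 G w :: "'a::real_inner \<Rightarrow>\<^sub>L 'a"
  assumes H0: "norm H0 = 1" and K: "fin_dim (kernel H0)" and G: "refl_ginv H0 G"
    and w: "norm w = 1"
    and dim: "\<forall>\<^sub>F l in at_right 0. same_kernel_dim H0 w l"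
    and D: "(theta_max H0 w has_real_derivative D) (at_right 0)"
  shows "sensitivity H0 w \<le> kappa H0 G"
proof -
  have "Limsup (at_right 0) (\<lambda>l. ereal (theta_max H0 w l / l)) = ereal D"
    by (rule lim_imp_Limsup) (simp_all add: tendsto_ereal theta_max_over_tendsto_derivative[OF D])
  then show ?thesis
    using Limsup_theta_max_over_le_kappa[OF H0 K G w dim] sensitivity_eq[OF D] by simp
qed

theorem mainTheorem15:
  fixes H0 G w :: "'a::{real_inner, complete_space} \<Rightarrow>\<^sub>L 'a"
  assumes "norm H0 = 1"
    and "fin_dim (kernel H0)"
    and "refl_ginv H0 G"
    and "norm w = 1"
  shows "(\<forall>l. 0 \<le> l \<and> l < 1 / (2 * kappa H0 G) \<and> same_kernel_dim H0 w l \<longrightarrow>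
            sin_theta_max H0 w l \<le> l * kappa H0 G / sqrt (1 - 2 * l * kappa H0 G))
       \<and> ((\<forall>\<^sub>F l in at_right 0. same_kernel_dim H0 w l) \<longrightarrow>
            Limsup (at_right 0) (\<lambda>l. ereal (theta_max H0 w l / l)) \<le> ereal (kappa H0 G))
       \<and> ((\<forall>\<^sub>F l in at_right 0. same_kernel_dim H0 w l) \<and>
           (\<exists>D. (theta_max H0 w has_real_derivative D) (at_right 0)) \<longrightarrow>
            sensitivity H0 w \<le> kappa H0 G)
       \<and> (\<forall>S. S \<noteq> {} \<and> (\<forall>v\<in>S. norm v = 1 \<and> (\<forall>\<^sub>F l in at_right 0. same_kernel_dim H0 v l) \<and>
                 (\<exists>D. (theta_max H0 v has_real_derivative D) (at_right 0))) \<longrightarrow>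
            (SUP v\<in>S. sensitivity H0 v) \<le> kappa H0 G)"
proof (intro conjI allI impI)
  fix l assume "0 \<le> l \<and> l < 1 / (2 * kappa H0 G) \<and> same_kernel_dim H0 w l"
  then show "sin_theta_max H0 w l \<le> l * kappa H0 G / sqrt (1 - 2 * l * kappa H0 G)"
    using sin_theta_max_bounds(1)[OF assms] by blast
next
  assume "\<forall>\<^sub>F l in at_right 0. same_kernel_dim H0 w l"
  then show "Limsup (at_right 0) (\<lambda>l. ereal (theta_max H0 w l / l)) \<le> ereal (kappa H0 G)"
    by (rule Limsup_theta_max_over_le_kappa[OF assms])
next
  assume "(\<forall>\<^sub>F l in at_right 0. same_kernel_dim H0 w l) \<and>
    (\<exists>D. (theta_max H0 w has_real_derivative D) (at_right 0))"
  then show "sensitivity H0 w \<le> kappa H0 G"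
    using sensitivity_le_kappa[OF assms] by blast
next
  fix S assume S: "S \<noteq> {} \<and> (\<forall>v\<in>S. norm v = 1 \<and> (\<forall>\<^sub>F l in at_right 0. same_kernel_dim H0 v l) \<and>
    (\<exists>D. (theta_max H0 v has_real_derivative D) (at_right 0)))"
  then show "(SUP v\<in>S. sensitivity H0 v) \<le> kappa H0 G"
    using sensitivity_le_kappa[OF assms(1-3)] by (metis cSUP_least)
qed

end
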